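(* Assume $a=a(\epsilon)\geq0$ is bounded and let $u_{\epsilon,a}$ be solutions of $\epsilon^2\Delta u+\mu u-|u|^2u+\epsilon af=0$ on $\mathbb{R}^2$ which are uniformly bounded. Then for every $\rho_1>\rho$, the maps $\frac{u_{\epsilon,a}}{\epsilon}$ and $\nabla u_{\epsilon,a}$ are uniformly bounded (for all sufficiently small $\epsilon$) on the set $\{x:|x|\geq\rho_1\}$.
   Context: $\mu\in C^\infty(\mathbb{R}^2,\mathbb{R})$ is radial, $\mu(x)=\mu_{\mathrm{rad}}(|x|)$, $\mu_{\mathrm{rad}}$ smooth with an even extension, $\mu\in L^\infty$, $\mu_{\mathrm{rad}}'<0$ on $(0,\infty)$, $\mu_{\mathrm{rad}}(\rho)=0$ for a unique $\rho>0$. $f\in C^\infty(\mathbb{R}^2,\mathbb{R}^2)$, $f(x)=f_{\mathrm{rad}}(|x|)\frac{x}{|x|}$, $f_{\mathrm{rad}}$ smooth with an odd extension, $f\in L^1\cap L^\infty$, $f_{\mathrm{rad}}>0$ on $(0,\infty)$. *)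

theory Defs
  imports "HOL-Analysis.Analysis"
begin

definition smooth_real :: "(real \<Rightarrow> real) \<Rightarrow> bool" where
  "smooth_real g \<longleftrightarrow> (\<forall>n x. ((deriv ^^ n) g) differentiable (at x))"

definition C2_plane :: "(real^2 \<Rightarrow> real^2) \<Rightarrow> bool" where
  "C2_plane u \<longleftrightarrow> (\<exists>Du D2u.
     (\<forall>x. (u has_derivative blinfun_apply (Du x)) (at x)) \<and>
     (\<forall>x. (Du has_derivative blinfun_apply (D2u x)) (at x)) \<and>
     continuous_on UNIV D2u)"

definition laplacian :: "(real^2 \<Rightarrow> real^2) \<Rightarrow> real^2 \<Rightarrow> real^2" where
  "laplacian u x = (\<Sum>i\<in>UNIV.
     vector_derivative (\<lambda>t. vector_derivative (\<lambda>s. u (x + s *\<^sub>R axis i 1)) (at t)) (at 0))"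

end

theory Submission
  imports Defs
begin

text \<open>Beyond the circle of radius \<rho> the potential \<mu> is negative, so every component w of u
  satisfies a screened equation \<epsilon>^2 \<Delta>w = c w - \<epsilon> a f_j with c = |u|^2 - \<mu> \<ge> m > 0.
  Comparing w on a square of half-side r with the barrier
  E/m + M \<Sum>_k cosh (\<kappa> (y_k - x_k)) / cosh (\<kappa> r), \<kappa> = sqrt m / \<epsilon>, through the maximum
  principle gives |w(x)| = O(\<epsilon>), the cosh term being exponentially small in 1/\<epsilon>.
  The equation then gives \<Delta>u = O(1/\<epsilon>), and an interior estimate on squares of side 2\<epsilon>,
  obtained by dominating the odd part of w under a coordinate reflection by a quadratic barrier,
  bounds the derivative of u by O(sup |u| / \<epsilon> + \<epsilon> sup |\<Delta>u|) = O(1).\<close>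

section \<open>Directional derivatives along lines\<close>

text \<open>The maximum principle only needs second derivatives along lines, so we work with this
  notion rather than with Frechet derivatives.\<close>

definition twice_directionally_differentiable ::
  "('a::real_normed_vector \<Rightarrow> real) \<Rightarrow> ('a \<Rightarrow> 'a \<Rightarrow> real) \<Rightarrow> ('a \<Rightarrow> 'a \<Rightarrow> real) \<Rightarrow> bool" where
  "twice_directionally_differentiable w Dw D2w \<longleftrightarrow>
     (\<forall>x v. ((\<lambda>t. w (x + t *\<^sub>R v)) has_real_derivative Dw x v) (at 0)) \<and>
     (\<forall>x v. ((\<lambda>t. Dw (x + t *\<^sub>R v) v) has_real_derivative D2w x v) (at 0))"

lemma DERIV_along_line_shift:
  fixes v :: "'a::real_normed_vector"
  assumes "((\<lambda>s. g (x + t *\<^sub>R v + s *\<^sub>R v)) has_real_derivative D) (at 0)"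
  shows "((\<lambda>s. g (x + s *\<^sub>R v)) has_real_derivative D) (at t)"
proof -
  have "(\<lambda>s. g (x + (s + t) *\<^sub>R v)) = (\<lambda>s. g (x + t *\<^sub>R v + s *\<^sub>R v))"
    by (simp add: scaleR_add_left add_ac)
  with assms have "((\<lambda>s. g (x + (s + t) *\<^sub>R v)) has_real_derivative D) (at 0)"
    by simp
  then show ?thesis
    using DERIV_shift[of "\<lambda>s. g (x + s *\<^sub>R v)" D 0 t] by simp
qed

lemma twice_directionally_differentiableD:
  fixes v :: "'a::real_normed_vector"
  assumes "twice_directionally_differentiable w Dw D2w"
  shows "((\<lambda>t. w (x + t *\<^sub>R v)) has_real_derivative Dw (x + t *\<^sub>R v) v) (at t)"
    and "((\<lambda>t. Dw (x + t *\<^sub>R v) v) has_real_derivative D2w (x + t *\<^sub>R v) v) (at t)"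
proof -
  have "((\<lambda>s. w (x + t *\<^sub>R v + s *\<^sub>R v)) has_real_derivative Dw (x + t *\<^sub>R v) v) (at 0)"
    and "((\<lambda>s. Dw (x + t *\<^sub>R v + s *\<^sub>R v) v) has_real_derivative D2w (x + t *\<^sub>R v) v) (at 0)"
    using assms by (simp_all add: twice_directionally_differentiable_def)
  then show "((\<lambda>t. w (x + t *\<^sub>R v)) has_real_derivative Dw (x + t *\<^sub>R v) v) (at t)"
    and "((\<lambda>t. Dw (x + t *\<^sub>R v) v) has_real_derivative D2w (x + t *\<^sub>R v) v) (at t)"
    by (auto intro: DERIV_along_line_shift)
qed

lemma twice_directionally_differentiable_const:
  "twice_directionally_differentiable (\<lambda>x. c) (\<lambda>x v. 0) (\<lambda>x v. 0)"
  by (simp add: twice_directionally_differentiable_def)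

lemma twice_directionally_differentiable_add:
  assumes "twice_directionally_differentiable f Df D2f"
    and "twice_directionally_differentiable g Dg D2g"
  shows "twice_directionally_differentiable (\<lambda>x. f x + g x) (\<lambda>x v. Df x v + Dg x v)
    (\<lambda>x v. D2f x v + D2g x v)"
  using assms by (simp add: twice_directionally_differentiable_def DERIV_add)

lemma twice_directionally_differentiable_cmult:
  assumes "twice_directionally_differentiable f Df D2f"
  shows "twice_directionally_differentiable (\<lambda>x. c * f x) (\<lambda>x v. c * Df x v) (\<lambda>x v. c * D2f x v)"
  using assms by (simp add: twice_directionally_differentiable_def DERIV_cmult)

lemma twice_directionally_differentiable_sum:
  assumes "finite I" and "\<And>i. i \<in> I \<Longrightarrow> twice_directionally_differentiable (f i) (Df i) (D2f i)"
  shows "twice_directionally_differentiable (\<lambda>x. \<Sum>i\<in>I. f i x) (\<lambda>x v. \<Sum>i\<in>I. Df i x v)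
    (\<lambda>x v. \<Sum>i\<in>I. D2f i x v)"
  using assms
proof (induction I rule: finite_induct)
  case empty
  show ?case using twice_directionally_differentiable_const[of 0] by simp
next
  case (insert i I)
  then show ?case
    using twice_directionally_differentiable_add[of "f i" "Df i" "D2f i"] by simp
qed

lemma twice_directionally_differentiable_minus:
  "twice_directionally_differentiable w Dw D2w \<Longrightarrow>
   twice_directionally_differentiable (\<lambda>x. - w x) (\<lambda>x v. - Dw x v) (\<lambda>x v. - D2w x v)"
  unfolding twice_directionally_differentiable_def by (auto intro!: DERIV_minus)

lemma twice_directionally_differentiable_compose_affine:
  assumes "twice_directionally_differentiable f Df D2f" and "linear L"
  shows "twice_directionally_differentiable (\<lambda>x. f (a + L x)) (\<lambda>x v. Df (a + L x) (L v))
    (\<lambda>x v. D2f (a + L x) (L v))"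
proof -
  have affine: "a + L (x + t *\<^sub>R v) = (a + L x) + t *\<^sub>R L v" for x v t
    using assms(2) by (simp add: linear_add linear_scale add.assoc)
  have "((\<lambda>t. f ((a + L x) + t *\<^sub>R L v)) has_real_derivative Df (a + L x) (L v)) (at 0)"
    and "((\<lambda>t. Df ((a + L x) + t *\<^sub>R L v) (L v)) has_real_derivative D2f (a + L x) (L v)) (at 0)"
    for x v
    using assms(1) by (simp_all add: twice_directionally_differentiable_def)
  then show ?thesis
    unfolding twice_directionally_differentiable_def by (simp only: affine) simp
qed

lemma twice_directionally_differentiable_coordinate:
  fixes k :: "'n::finite"
  assumes "\<And>s. (g has_real_derivative g' s) (at s)" and "\<And>s. (g' has_real_derivative g'' s) (at s)"
  shows "twice_directionally_differentiable (\<lambda>y::real^'n. g (y $ k)) (\<lambda>y v. g' (y $ k) * v $ k)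
    (\<lambda>y v. g'' (y $ k) * (v $ k)\<^sup>2)"
proof -
  have line: "((\<lambda>t. (x + t *\<^sub>R v) $ k) has_real_derivative v $ k) (at 0)" for x v :: "real^'n"
    by (auto intro!: derivative_eq_intros)
  have "((\<lambda>t. g ((x + t *\<^sub>R v) $ k)) has_real_derivative g' (x $ k) * v $ k) (at 0)" for x v
    using DERIV_chain2[OF assms(1) line, of x v] by simp
  moreover have "((\<lambda>t. g' ((x + t *\<^sub>R v) $ k) * v $ k) has_real_derivative g'' (x $ k) * (v $ k)\<^sup>2) (at 0)"
    for x v
    using DERIV_cmult_right[OF DERIV_chain2[OF assms(2) line, of x v], of "v $ k"]
    by (simp add: power2_eq_square mult.assoc)
  ultimately show ?thesis
    by (simp add: twice_directionally_differentiable_def)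
qed

lemma directional_derivative_minus:
  fixes v :: "'a::real_normed_vector"
  assumes "twice_directionally_differentiable w Dw D2w"
  shows "Dw x (- v) = - Dw x v"
proof -
  have "((\<lambda>t. w (x + t *\<^sub>R v)) has_real_derivative Dw x v) (at (- 0))"
    using twice_directionally_differentiableD(1)[OF assms, of x v 0] by simp
  then have "((\<lambda>t. w (x + (- t) *\<^sub>R v)) has_real_derivative - Dw x v) (at 0)"
    by (rule DERIV_mirror[THEN iffD1])
  moreover have "((\<lambda>t. w (x + (- t) *\<^sub>R v)) has_real_derivative Dw x (- v)) (at 0)"
    using twice_directionally_differentiableD(1)[OF assms, of x "- v" 0] by simp
  ultimately have "- Dw x v = Dw x (- v)" by (rule DERIV_unique)
  then show ?thesis by simp
qed

lemma second_directional_derivative_minus: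
  fixes v :: "'a::real_normed_vector"
  assumes "twice_directionally_differentiable w Dw D2w"
  shows "D2w x (- v) = D2w x v"
proof -
  have "((\<lambda>t. Dw (x + t *\<^sub>R v) v) has_real_derivative D2w x v) (at (- 0))"
    using twice_directionally_differentiableD(2)[OF assms, of x v 0] by simp
  then have "((\<lambda>t. Dw (x + (- t) *\<^sub>R v) v) has_real_derivative - D2w x v) (at 0)"
    by (rule DERIV_mirror[THEN iffD1])
  from DERIV_minus[OF this]
  have "((\<lambda>t. - Dw (x + (- t) *\<^sub>R v) v) has_real_derivative D2w x v) (at 0)"
    by simp
  moreover have "((\<lambda>t. - Dw (x + (- t) *\<^sub>R v) v) has_real_derivative D2w x (- v)) (at 0)"
    using twice_directionally_differentiableD(2)[OF assms, of x "- v" 0]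
    by (simp add: directional_derivative_minus[OF assms])
  ultimately have "D2w x v = D2w x (- v)" by (rule DERIV_unique)
  then show ?thesis ..
qed

lemma DERIV_second_local_max:
  fixes g g' :: "real \<Rightarrow> real"
  assumes d1: "\<And>t. (g has_real_derivative g' t) (at t)"
    and d2: "(g' has_real_derivative D) (at 0)"
    and max: "eventually (\<lambda>t. g t \<le> g 0) (nhds 0)"
  shows "D \<le> 0"
proof (rule ccontr)
  assume "\<not> D \<le> 0"
  obtain \<delta> where \<delta>: "\<delta> > 0" "\<And>t. \<bar>t\<bar> < \<delta> \<Longrightarrow> g t \<le> g 0"
    using max unfolding eventually_nhds_metric dist_real_def by auto
  have g'0: "g' 0 = 0"
    using DERIV_local_max[OF d1 \<delta>(1)] \<delta>(2) by (simp add: dist_real_def)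
  obtain e where e: "e > 0" "\<And>h. h > 0 \<Longrightarrow> h < e \<Longrightarrow> g' 0 < g' (0 + h)"
    using DERIV_pos_inc_right[OF d2] \<open>\<not> D \<le> 0\<close> by (meson not_le)
  define h where "h = min e \<delta> / 2"
  have h: "h > 0" "h < e" "h < \<delta>"
    using e \<delta> by (auto simp: h_def)
  obtain z where z: "0 < z" "z < h" "g h - g 0 = h * g' z"
    using MVT2[of 0 h g g'] h d1 by auto
  have "g' z > 0"
    using e(2)[of z] z h g'0 by auto
  then have "g h > g 0"
    using z h by (simp add: algebra_simps)
  with \<delta>(2)[of h] h show False
    by simp
qed

lemma twice_directionally_differentiable_local_max:
  fixes v :: "'a::real_normed_vector"
  assumes "twice_directionally_differentiable w Dw D2w"
    and "open U" "x \<in> U" "\<forall>y\<in>U. w y \<le> w x"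
  shows "D2w x v \<le> 0"
proof (rule DERIV_second_local_max[where g' = "\<lambda>t. Dw (x + t *\<^sub>R v) v"])
  show "((\<lambda>t. w (x + t *\<^sub>R v)) has_real_derivative Dw (x + t *\<^sub>R v) v) (at t)" for t
    using assms(1) by (rule twice_directionally_differentiableD)
  show "((\<lambda>t. Dw (x + t *\<^sub>R v) v) has_real_derivative D2w x v) (at 0)"
    using twice_directionally_differentiableD(2)[OF assms(1), of x v 0] by simp
  have "((\<lambda>t. x + t *\<^sub>R v) \<longlongrightarrow> x + 0 *\<^sub>R v) (nhds 0)"
    by (intro tendsto_intros filterlim_ident)
  then have "eventually (\<lambda>t. x + t *\<^sub>R v \<in> U) (nhds 0)"
    using assms(2,3) by (simp add: topological_tendstoD)
  then show "eventually (\<lambda>t. w (x + t *\<^sub>R v) \<le> w (x + 0 *\<^sub>R v)) (nhds 0)"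
    by (rule eventually_mono) (simp add: assms(4))
qed

section \<open>The Laplacian and the maximum principle\<close>

definition directional_laplacian :: "(real^'n \<Rightarrow> real^'n \<Rightarrow> real) \<Rightarrow> real^'n \<Rightarrow> real" where
  "directional_laplacian D2w x = (\<Sum>k\<in>UNIV. D2w x (axis k 1))"

lemma directional_laplacian_add:
  "directional_laplacian (\<lambda>x v. D2f x v + D2g x v) y = directional_laplacian D2f y + directional_laplacian D2g y"
  by (simp add: directional_laplacian_def sum.distrib)

lemma directional_laplacian_cmult:
  "directional_laplacian (\<lambda>x v. c * D2f x v) y = c * directional_laplacian D2f y"
  by (simp add: directional_laplacian_def sum_distrib_left)

lemma directional_laplacian_minus:
  "directional_laplacian (\<lambda>x v. - D2f x v) y = - directional_laplacian D2f y"
  by (simp add: directional_laplacian_def sum_negf)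

lemma directional_laplacian_sum:
  "directional_laplacian (\<lambda>x v. \<Sum>i\<in>I. D2f i x v) y = (\<Sum>i\<in>I. directional_laplacian (D2f i) y)"
  unfolding directional_laplacian_def by (rule sum.swap)

lemma directional_laplacian_coordinate:
  fixes k :: "'n::finite"
  shows "directional_laplacian (\<lambda>y v. g'' (y $ k) * (v $ k)\<^sup>2) x = g'' (x $ k)"
proof -
  have "g'' (x $ k) * ((axis j 1 :: real^'n) $ k)\<^sup>2 = (if j = k then g'' (x $ k) else 0)" for j
    by (simp add: axis_def)
  then show ?thesis by (simp add: directional_laplacian_def)
qed

lemma directional_laplacian_local_max:
  assumes "twice_directionally_differentiable w Dw D2w"
    and "open U" "x \<in> U" "\<forall>y\<in>U. w y \<le> w x"
  shows "directional_laplacian D2w x \<le> 0"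
  unfolding directional_laplacian_def
  using twice_directionally_differentiable_local_max[OF assms] by (simp add: sum_nonpos)

lemma weak_maximum_principle:
  fixes z :: "real^'n \<Rightarrow> real"
  assumes "twice_directionally_differentiable z Dz D2z"
    and "compact K" "continuous_on K z" "open U" "U \<subseteq> K"
    and boundary: "\<And>y. y \<in> K - U \<Longrightarrow> z y \<le> 0"
    and interior: "\<And>y. y \<in> U \<Longrightarrow> z y > 0 \<Longrightarrow> directional_laplacian D2z y > 0"
    and "y \<in> K"
  shows "z y \<le> 0"
proof -
  obtain x where x: "x \<in> K" "\<forall>y\<in>K. z y \<le> z x"
    using continuous_attains_sup[OF assms(2) _ assms(3)] \<open>y \<in> K\<close> by blast
  have "z x \<le> 0"
  proof (rule ccontr)
    assume pos: "\<not> z x \<le> 0"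
    with boundary x(1) have "x \<in> U" by force
    with x(2) \<open>U \<subseteq> K\<close> have "directional_laplacian D2z x \<le> 0"
      by (intro directional_laplacian_local_max[OF assms(1,4)]) auto
    with interior[OF \<open>x \<in> U\<close>] pos show False by simp
  qed
  with x(2) \<open>y \<in> K\<close> show ?thesis by force
qed

section \<open>Interior bound for the screened equation\<close>

lemma mem_cbox_cart_centered:
  fixes x y :: "real^'n"
  shows "y \<in> cbox (x - (\<chi> k. r)) (x + (\<chi> k. r)) \<longleftrightarrow> (\<forall>k. \<bar>y $ k - x $ k\<bar> \<le> r)"
  by (auto simp: mem_box_cart abs_le_iff algebra_simps)

lemma mem_box_cart_centered:
  fixes x y :: "real^'n"
  shows "y \<in> box (x - (\<chi> k. r)) (x + (\<chi> k. r)) \<longleftrightarrow> (\<forall>k. \<bar>y $ k - x $ k\<bar> < r)"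
  by (auto simp: mem_box_cart abs_less_iff algebra_simps)

text \<open>For \<kappa> = sqrt m / \<epsilon> the barrier satisfies \<epsilon>^2 \<Delta>B = m B; it is at least 1 on the boundary
  of the square of half-side r around x but exponentially small at x.\<close>

definition cosh_barrier :: "real \<Rightarrow> real \<Rightarrow> real^'n \<Rightarrow> real^'n \<Rightarrow> real" where
  "cosh_barrier \<kappa> r x y = (\<Sum>k\<in>UNIV. cosh (\<kappa> * (y $ k - x $ k))) / cosh (\<kappa> * r)"

lemma cosh_barrier_twice_directionally_differentiable:
  obtains DB D2B where "twice_directionally_differentiable (cosh_barrier \<kappa> r x) DB D2B"
    and "\<And>y. directional_laplacian D2B y = \<kappa>\<^sup>2 * cosh_barrier \<kappa> r x y"
proof -
  define b where "b k s = cosh (\<kappa> * (s - x $ k)) / cosh (\<kappa> * r)" for k s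
  have B: "cosh_barrier \<kappa> r x = (\<lambda>y. \<Sum>k\<in>UNIV. b k (y $ k))"
    by (simp add: fun_eq_iff cosh_barrier_def b_def sum_divide_distrib)
  have "(b k has_real_derivative \<kappa> * sinh (\<kappa> * (s - x $ k)) / cosh (\<kappa> * r)) (at s)"
    and "((\<lambda>s. \<kappa> * sinh (\<kappa> * (s - x $ k)) / cosh (\<kappa> * r)) has_real_derivative \<kappa>\<^sup>2 * b k s) (at s)"
    for k s
    unfolding b_def by (auto intro!: derivative_eq_intros simp: power2_eq_square)
  then have "twice_directionally_differentiable (cosh_barrier \<kappa> r x)
      (\<lambda>y v. \<Sum>k\<in>UNIV. \<kappa> * sinh (\<kappa> * (y $ k - x $ k)) / cosh (\<kappa> * r) * v $ k)
      (\<lambda>y v. \<Sum>k\<in>UNIV. \<kappa>\<^sup>2 * b k (y $ k) * (v $ k)\<^sup>2)"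
    unfolding B
    by (intro twice_directionally_differentiable_sum twice_directionally_differentiable_coordinate) auto
  moreover have "directional_laplacian (\<lambda>y v. \<Sum>k\<in>UNIV. \<kappa>\<^sup>2 * b k (y $ k) * (v $ k)\<^sup>2) y
      = \<kappa>\<^sup>2 * cosh_barrier \<kappa> r x y" for y
  proof -
    have "directional_laplacian (\<lambda>y v. \<kappa>\<^sup>2 * b k (y $ k) * (v $ k)\<^sup>2) y = \<kappa>\<^sup>2 * b k (y $ k)" for k
      using directional_laplacian_coordinate[of "\<lambda>s. \<kappa>\<^sup>2 * b k s" k y] by simp
    then show ?thesis
      by (simp add: directional_laplacian_sum B sum_distrib_left)
  qed
  ultimately show ?thesis
    by (rule that)
qed

lemma cosh_barrier_nonneg: "cosh_barrier \<kappa> r x y \<ge> 0"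
  by (simp add: cosh_barrier_def sum_nonneg)

lemma cosh_barrier_center: "cosh_barrier \<kappa> r x x = real CARD('n) / cosh (\<kappa> * r)"
  for x :: "real^'n"
  by (simp add: cosh_barrier_def)

lemma cosh_barrier_ge_1:
  assumes "\<kappa> \<ge> 0" and "\<bar>y $ k - x $ k\<bar> = r"
  shows "cosh_barrier \<kappa> r x y \<ge> 1"
proof -
  have "cosh (\<kappa> * r) = cosh (\<kappa> * (y $ k - x $ k))"
    using assms by (simp add: abs_mult)
  also have "\<dots> \<le> (\<Sum>j\<in>UNIV. cosh (\<kappa> * (y $ j - x $ j)))"
    by (rule member_le_sum) auto
  finally show ?thesis
    by (simp add: cosh_barrier_def)
qed

lemma continuous_on_cosh_barrier: "continuous_on S (cosh_barrier \<kappa> r x)"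
  unfolding cosh_barrier_def by (intro continuous_intros) auto

lemma screened_interior_upper_bound:
  fixes w :: "real^'n \<Rightarrow> real"
  assumes w: "twice_directionally_differentiable w Dw D2w" "continuous_on UNIV w"
    and pos: "\<epsilon> > 0" "m > 0" "r > 0" "E \<ge> 0"
    and bounds: "\<And>y. (\<forall>k. \<bar>y $ k - x $ k\<bar> \<le> r) \<Longrightarrow>
       \<bar>w y\<bar> \<le> M \<and> (\<exists>c\<ge>m. c * w y - E \<le> \<epsilon>\<^sup>2 * directional_laplacian D2w y)"
  shows "w x \<le> E / m + real CARD('n) * M / cosh (sqrt m / \<epsilon> * r)"
proof -
  define \<kappa> where "\<kappa> = sqrt m / \<epsilon>"
  have \<kappa>: "\<epsilon>\<^sup>2 * \<kappa>\<^sup>2 = m" "\<kappa> \<ge> 0"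
    using pos by (simp_all add: \<kappa>_def power_divide)
  define B where "B = cosh_barrier \<kappa> r x"
  obtain DB D2B where B: "twice_directionally_differentiable B DB D2B"
    and B_laplacian: "\<And>y. directional_laplacian D2B y = \<kappa>\<^sup>2 * B y"
    using cosh_barrier_twice_directionally_differentiable[of \<kappa> r x] unfolding B_def by metis
  have M: "M \<ge> 0"
    using bounds[of x] pos by auto
  define z where "z y = w y + (- M) * B y + (- (E / m))" for y
  have z: "twice_directionally_differentiable z (\<lambda>y v. Dw y v + (- M) * DB y v + 0)
      (\<lambda>y v. D2w y v + (- M) * D2B y v + 0)"
    unfolding z_def
    by (intro twice_directionally_differentiable_add twice_directionally_differentiable_cmult
        twice_directionally_differentiable_const w B)
  have z_laplacian: "directional_laplacian (\<lambda>y v. D2w y v + (- M) * D2B y v + 0) y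
      = directional_laplacian D2w y - M * \<kappa>\<^sup>2 * B y" for y
    using B_laplacian[of y]
    by (simp add: directional_laplacian_def sum_subtractf sum_distrib_left[symmetric])
  define K where "K = cbox (x - (\<chi> k. r)) (x + (\<chi> k. r))"
  define U where "U = box (x - (\<chi> k. r)) (x + (\<chi> k. r))"
  have "z x \<le> 0"
  proof (rule weak_maximum_principle[OF z, of K U])
    show "compact K" "open U" "U \<subseteq> K"
      by (simp_all add: K_def U_def box_subset_cbox open_box)
    show "continuous_on K z"
      unfolding z_def B_def
      by (intro continuous_intros continuous_on_subset[OF w(2)] continuous_on_cosh_barrier) auto
    show "x \<in> K"
      using pos by (simp add: K_def mem_cbox_cart_centered)
  next
    fix y assume "y \<in> K - U"
    then have y: "\<forall>k. \<bar>y $ k - x $ k\<bar> \<le> r" and "\<exists>k. \<not> \<bar>y $ k - x $ k\<bar> < r"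
      by (simp_all add: K_def U_def mem_cbox_cart_centered mem_box_cart_centered)
    then obtain k where "\<bar>y $ k - x $ k\<bar> = r"
      by (metis linorder_not_less order_antisym)
    then have "1 \<le> B y"
      unfolding B_def by (rule cosh_barrier_ge_1[OF \<kappa>(2)])
    then have "M \<le> M * B y"
      using M by (metis mult_left_mono mult.right_neutral)
    moreover have "w y \<le> M" "E / m \<ge> 0"
      using bounds[OF y] pos by auto
    ultimately show "z y \<le> 0"
      by (simp add: z_def)
  next
    fix y assume "y \<in> U" "z y > 0"
    then have y: "\<forall>k. \<bar>y $ k - x $ k\<bar> \<le> r"
      by (auto simp: U_def mem_box_cart_centered less_imp_le)
    obtain c where c: "c \<ge> m" "c * w y - E \<le> \<epsilon>\<^sup>2 * directional_laplacian D2w y"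
      using bounds[OF y] by blast
    have wy: "w y > E / m + M * B y"
      using \<open>z y > 0\<close> by (simp add: z_def)
    moreover have "E / m \<ge> 0" "M * B y \<ge> 0"
      using pos M by (simp_all add: B_def cosh_barrier_nonneg)
    ultimately have "m * w y \<le> c * w y"
      using c(1) by (intro mult_right_mono) auto
    moreover have "m * w y > E + m * M * B y"
      using mult_strict_left_mono[OF wy \<open>m > 0\<close>] pos by (simp add: distrib_left)
    ultimately have "\<epsilon>\<^sup>2 * directional_laplacian D2w y > \<epsilon>\<^sup>2 * (M * \<kappa>\<^sup>2 * B y)"
      using c(2) \<kappa>(1) by (simp add: algebra_simps)
    then show "directional_laplacian (\<lambda>y v. D2w y v + (- M) * D2B y v + 0) y > 0"
      unfolding z_laplacian using pos by (simp add: mult.assoc)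
  qed
  then show ?thesis
    by (simp add: z_def B_def cosh_barrier_center \<kappa>_def mult.commute)
qed

lemma screened_interior_bound:
  fixes w :: "real^'n \<Rightarrow> real"
  assumes w: "twice_directionally_differentiable w Dw D2w" "continuous_on UNIV w"
    and pos: "\<epsilon> > 0" "m > 0" "r > 0"
    and bounds: "\<And>y. (\<forall>k. \<bar>y $ k - x $ k\<bar> \<le> r) \<Longrightarrow>
       \<bar>w y\<bar> \<le> M \<and> (\<exists>c\<ge>m. \<bar>\<epsilon>\<^sup>2 * directional_laplacian D2w y - c * w y\<bar> \<le> E)"
  shows "\<bar>w x\<bar> \<le> E / m + real CARD('n) * M / cosh (sqrt m / \<epsilon> * r)"
proof -
  have "E \<ge> 0"
    using bounds[of x] pos by force
  have "w x \<le> E / m + real CARD('n) * M / cosh (sqrt m / \<epsilon> * r)"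
  proof (rule screened_interior_upper_bound[OF w pos \<open>E \<ge> 0\<close>])
    fix y assume "\<forall>k. \<bar>y $ k - x $ k\<bar> \<le> r"
    then obtain c where "\<bar>w y\<bar> \<le> M" "c \<ge> m" "\<bar>\<epsilon>\<^sup>2 * directional_laplacian D2w y - c * w y\<bar> \<le> E"
      using bounds by blast
    then show "\<bar>w y\<bar> \<le> M \<and> (\<exists>c\<ge>m. c * w y - E \<le> \<epsilon>\<^sup>2 * directional_laplacian D2w y)"
      by (auto simp: abs_le_iff intro!: exI[of _ c])
  qed
  moreover have "- w x \<le> E / m + real CARD('n) * M / cosh (sqrt m / \<epsilon> * r)"
  proof (rule screened_interior_upper_bound[OF twice_directionally_differentiable_minus[OF w(1)] _ pos \<open>E \<ge> 0\<close>])
    show "continuous_on UNIV (\<lambda>y. - w y)"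
      using w(2) by (rule continuous_on_minus)
    fix y assume "\<forall>k. \<bar>y $ k - x $ k\<bar> \<le> r"
    then obtain c where "\<bar>w y\<bar> \<le> M" "c \<ge> m" "\<bar>\<epsilon>\<^sup>2 * directional_laplacian D2w y - c * w y\<bar> \<le> E"
      using bounds by blast
    then show "\<bar>- w y\<bar> \<le> M \<and>
        (\<exists>c\<ge>m. c * - w y - E \<le> \<epsilon>\<^sup>2 * directional_laplacian (\<lambda>x v. - D2w x v) y)"
      by (auto simp: abs_le_iff directional_laplacian_minus intro!: exI[of _ c])
  qed
  ultimately show ?thesis
    by linarith
qed

section \<open>Interior derivative bound in the plane\<close>

lemma DERIV_le_of_right_bound:
  fixes g :: "real \<Rightarrow> real"
  assumes "(g has_real_derivative D) (at 0)" "g 0 = 0" "\<delta> > 0"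
    and bound: "\<And>t. 0 < t \<Longrightarrow> t < \<delta> \<Longrightarrow> g t \<le> C * t"
  shows "D \<le> C"
proof (rule ccontr)
  assume "\<not> D \<le> C"
  have "((\<lambda>t. g t - C * t) has_real_derivative D - C) (at 0)"
    using assms(1) by (auto intro!: derivative_eq_intros)
  moreover have "0 < D - C"
    using \<open>\<not> D \<le> C\<close> by simp
  ultimately obtain e where e: "e > 0" "\<forall>h>0. h < e \<longrightarrow> g 0 - C * 0 < g (0 + h) - C * (0 + h)"
    by (blast dest: DERIV_pos_inc_right)
  define h where "h = min e \<delta> / 2"
  have "0 < h" "h < e" "h < \<delta>"
    using e \<open>\<delta> > 0\<close> by (auto simp: h_def)
  with e(2) bound[of h] assms(2) show False
    by force
qed

definition coordinate_reflection :: "'n::finite \<Rightarrow> real \<Rightarrow> real^'n \<Rightarrow> real^'n" where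
  "coordinate_reflection i c y = (\<chi> k. if k = i then 2 * c - y $ k else y $ k)"

lemma continuous_on_coordinate_reflection: "continuous_on S (coordinate_reflection i c)"
  unfolding coordinate_reflection_def
proof (intro continuous_on_vec_lambda)
  show "continuous_on S (\<lambda>y. if k = i then 2 * c - y $ k else y $ k)" for k
    by (cases "k = i") (simp_all add: continuous_on_diff continuous_on_component)
qed

lemma twice_directionally_differentiable_reflection:
  fixes w :: "real^'n \<Rightarrow> real" and i :: 'n
  assumes "twice_directionally_differentiable w Dw D2w"
  shows "twice_directionally_differentiable (\<lambda>y. w (coordinate_reflection i c y))
    (\<lambda>y v. Dw (coordinate_reflection i c y) (coordinate_reflection i 0 v))
    (\<lambda>y v. D2w (coordinate_reflection i c y) (coordinate_reflection i 0 v))"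
proof -
  define a :: "real^'n" where "a = (\<chi> k. if k = i then 2 * c else 0)"
  have "linear (coordinate_reflection i 0)"
    by (auto simp: linear_iff vec_eq_iff coordinate_reflection_def)
  moreover have "coordinate_reflection i c y = a + coordinate_reflection i 0 y" for y
    by (simp add: vec_eq_iff coordinate_reflection_def a_def)
  ultimately show ?thesis
    using twice_directionally_differentiable_compose_affine[OF assms, of "coordinate_reflection i 0" a]
    by simp
qed

lemma directional_laplacian_reflection:
  assumes "twice_directionally_differentiable w Dw D2w"
  shows "directional_laplacian (\<lambda>y v. D2w (coordinate_reflection i c y) (coordinate_reflection i 0 v)) y
    = directional_laplacian D2w (coordinate_reflection i c y)"
proof -
  have "coordinate_reflection i 0 (axis k 1) = (if k = i then - axis k 1 else axis k 1)" for k
    by (simp add: vec_eq_iff coordinate_reflection_def axis_def)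
  then have "D2w p (coordinate_reflection i 0 (axis k 1)) = D2w p (axis k 1)" for p k
    by (simp add: second_directional_derivative_minus[OF assms])
  then show ?thesis
    by (simp add: directional_laplacian_def)
qed

lemma reflected_difference_twice_directionally_differentiable:
  assumes w: "twice_directionally_differentiable w Dw D2w"
    and \<psi>: "twice_directionally_differentiable \<psi> D\<psi> D2\<psi>"
  obtains Dz D2z where
    "twice_directionally_differentiable (\<lambda>y. (w y - w (coordinate_reflection i c y)) / 2 - \<psi> y) Dz D2z"
    and "\<And>y. directional_laplacian D2z y = (directional_laplacian D2w y
      - directional_laplacian D2w (coordinate_reflection i c y)) / 2 - directional_laplacian D2\<psi> y"
proof -
  define D2z where "D2z y v = 1/2 * D2w y v + - 1/2 * D2w (coordinate_reflection i c y) (coordinate_reflection i 0 v)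
      + - 1 * D2\<psi> y v" for y v
  have "twice_directionally_differentiable (\<lambda>y. 1/2 * w y + - 1/2 * w (coordinate_reflection i c y) + - 1 * \<psi> y)
      (\<lambda>y v. 1/2 * Dw y v + - 1/2 * Dw (coordinate_reflection i c y) (coordinate_reflection i 0 v) + - 1 * D\<psi> y v)
      D2z"
    unfolding D2z_def[abs_def]
    by (intro twice_directionally_differentiable_add twice_directionally_differentiable_cmult
        twice_directionally_differentiable_reflection w \<psi>)
  moreover have "(\<lambda>y. 1/2 * w y + - 1/2 * w (coordinate_reflection i c y) + - 1 * \<psi> y)
      = (\<lambda>y. (w y - w (coordinate_reflection i c y)) / 2 - \<psi> y)"
    by (simp add: fun_eq_iff field_simps)
  moreover have "directional_laplacian D2z y = (directional_laplacian D2w y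
      - directional_laplacian D2w (coordinate_reflection i c y)) / 2 - directional_laplacian D2\<psi> y" for y
    unfolding D2z_def[abs_def]
    by (simp only: directional_laplacian_add directional_laplacian_cmult
        directional_laplacian_reflection[OF w]) simp
  ultimately show ?thesis
    using that by simp
qed

text \<open>For c = A / d^2 this vanishes on the mirror line y_i = x_i, is at least A on the rest of the
  boundary of the half square x_i \<le> y_i \<le> x_i + d, |y_l - x_l| \<le> d, and its Laplacian -2B beats
  that of the odd part of a function whose Laplacian is bounded by B.\<close>

definition reflection_barrier :: "'n::finite \<Rightarrow> 'n \<Rightarrow> real \<Rightarrow> real \<Rightarrow> real \<Rightarrow> real^'n \<Rightarrow> real^'n \<Rightarrow> real"
  where "reflection_barrier i l c B d x y =
    c * ((y $ l - x $ l)\<^sup>2 + (y $ i - x $ i) * (2 * d - (y $ i - x $ i)))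
    + B * ((y $ i - x $ i) * (d - (y $ i - x $ i)))"

lemma reflection_barrier_twice_directionally_differentiable:
  obtains D\<psi> D2\<psi> where "twice_directionally_differentiable (reflection_barrier i l c B d x) D\<psi> D2\<psi>"
    and "\<And>y. directional_laplacian D2\<psi> y = - 2 * B"
proof -
  define p where "p s = c * ((s - x $ i) * (2 * d - (s - x $ i))) + B * ((s - x $ i) * (d - (s - x $ i)))" for s
  define p' where "p' s = 2 * c * (d - (s - x $ i)) + B * (d - 2 * (s - x $ i))" for s
  define q where "q s = c * (s - x $ l)\<^sup>2" for s
  define q' where "q' s = 2 * c * (s - x $ l)" for s
  have \<psi>: "reflection_barrier i l c B d x = (\<lambda>y. p (y $ i) + q (y $ l))"
    by (simp add: fun_eq_iff reflection_barrier_def p_def q_def algebra_simps)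
  have "(p has_real_derivative p' s) (at s)" "(p' has_real_derivative - 2 * c - 2 * B) (at s)"
    "(q has_real_derivative q' s) (at s)" "(q' has_real_derivative 2 * c) (at s)" for s
    unfolding p_def p'_def q_def q'_def
    by (auto intro!: derivative_eq_intros simp: algebra_simps power2_eq_square)
  then have "twice_directionally_differentiable (\<lambda>y. p (y $ i)) (\<lambda>y v. p' (y $ i) * v $ i)
      (\<lambda>y v. (- 2 * c - 2 * B) * (v $ i)\<^sup>2)"
    and "twice_directionally_differentiable (\<lambda>y. q (y $ l)) (\<lambda>y v. q' (y $ l) * v $ l)
      (\<lambda>y v. 2 * c * (v $ l)\<^sup>2)"
    using twice_directionally_differentiable_coordinate[of p p' "\<lambda>s. - 2 * c - 2 * B" i]
      twice_directionally_differentiable_coordinate[of q q' "\<lambda>s. 2 * c" l] by auto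
  then have "twice_directionally_differentiable (reflection_barrier i l c B d x)
      (\<lambda>y v. p' (y $ i) * v $ i + q' (y $ l) * v $ l)
      (\<lambda>y v. (- 2 * c - 2 * B) * (v $ i)\<^sup>2 + 2 * c * (v $ l)\<^sup>2)"
    unfolding \<psi> by (rule twice_directionally_differentiable_add)
  moreover have "directional_laplacian (\<lambda>y v. (- 2 * c - 2 * B) * (v $ i)\<^sup>2 + 2 * c * (v $ l)\<^sup>2) y = - 2 * B"
    for y
    using directional_laplacian_coordinate[of "\<lambda>s. - 2 * c - 2 * B" i y]
      directional_laplacian_coordinate[of "\<lambda>s. 2 * c" l y]
    by (simp add: directional_laplacian_add)
  ultimately show ?thesis
    by (rule that)
qed

lemma continuous_on_reflection_barrier: "continuous_on S (reflection_barrier i l c B d x)"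
  unfolding reflection_barrier_def by (intro continuous_intros)

lemma reflection_barrier_nonneg:
  assumes "c \<ge> 0" "B \<ge> 0" "x $ i \<le> y $ i" "y $ i \<le> x $ i + d"
  shows "reflection_barrier i l c B d x y \<ge> 0"
  using assms by (simp add: reflection_barrier_def)

lemma reflection_barrier_boundary:
  assumes "c \<ge> 0" "B \<ge> 0" "x $ i \<le> y $ i" "y $ i \<le> x $ i + d"
    and "y $ i = x $ i + d \<or> \<bar>y $ l - x $ l\<bar> = d"
  shows "c * d\<^sup>2 \<le> reflection_barrier i l c B d x y"
proof -
  define s where "s = y $ i - x $ i"
  define t where "t = y $ l - x $ l"
  have "0 \<le> s" "s \<le> d" and side: "s = d \<or> \<bar>t\<bar> = d"
    using assms(3-5) by (auto simp: s_def t_def)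
  have "d\<^sup>2 \<le> t\<^sup>2 + s * (2 * d - s)"
    using side
  proof
    assume "s = d"
    then show ?thesis
      by (simp add: power2_eq_square algebra_simps)
  next
    assume "\<bar>t\<bar> = d"
    then have "t\<^sup>2 = d\<^sup>2"
      by (metis power2_abs)
    moreover have "s * s \<le> s * (2 * d)"
      using \<open>0 \<le> s\<close> \<open>s \<le> d\<close> by (intro mult_left_mono) auto
    ultimately show ?thesis
      by (simp add: power2_eq_square algebra_simps)
  qed
  then have "c * d\<^sup>2 \<le> c * (t\<^sup>2 + s * (2 * d - s))"
    using assms(1) by (rule mult_left_mono)
  moreover have "B * (s * (d - s)) \<ge> 0"
    using assms(2) \<open>0 \<le> s\<close> \<open>s \<le> d\<close> by simp
  ultimately show ?thesis
    by (simp add: reflection_barrier_def s_def t_def)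
qed

lemma reflection_barrier_on_axis:
  assumes "l \<noteq> i" "c \<ge> 0" "B \<ge> 0" "0 \<le> t" "t \<le> d"
  shows "reflection_barrier i l c B d x (x + t *\<^sub>R axis i 1) \<le> (2 * c * d + B * d) * t"
proof -
  have "c * (t * (2 * d - t)) \<le> c * (2 * d * t)" "B * (t * (d - t)) \<le> B * d * t"
    using assms by (simp_all add: mult_left_mono algebra_simps)
  then show ?thesis
    using assms(1) by (simp add: reflection_barrier_def axis_def algebra_simps)
qed

lemma exhaust_2_pair:
  fixes i l k :: 2
  assumes "l \<noteq> i"
  shows "k = i \<or> k = l"
  using assms exhaust_2 by metis

lemma mem_cbox_half_square:
  fixes x y :: "real^2" and i l :: 2
  assumes "l \<noteq> i"
  shows "y \<in> cbox (\<chi> k. if k = i then x $ k else x $ k - d) (x + (\<chi> k. d))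
    \<longleftrightarrow> x $ i \<le> y $ i \<and> y $ i \<le> x $ i + d \<and> \<bar>y $ l - x $ l\<bar> \<le> d"
  unfolding mem_box_cart using assms exhaust_2_pair[OF assms]
  by (auto simp: abs_le_iff algebra_simps)

lemma mem_box_half_square:
  fixes x y :: "real^2" and i l :: 2
  assumes "l \<noteq> i"
  shows "y \<in> box (\<chi> k. if k = i then x $ k else x $ k - d) (x + (\<chi> k. d))
    \<longleftrightarrow> x $ i < y $ i \<and> y $ i < x $ i + d \<and> \<bar>y $ l - x $ l\<bar> < d"
  unfolding mem_box_cart using assms exhaust_2_pair[OF assms]
  by (auto simp: abs_less_iff algebra_simps)

lemma reflection_comparison:
  fixes w :: "real^2 \<Rightarrow> real" and i l :: 2
  assumes w: "twice_directionally_differentiable w Dw D2w" "continuous_on UNIV w"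
    and "l \<noteq> i" and pos: "d > 0" "B > 0"
    and bounds: "\<And>y. (\<forall>k. \<bar>y $ k - x $ k\<bar> \<le> d) \<Longrightarrow> \<bar>w y\<bar> \<le> A \<and> \<bar>directional_laplacian D2w y\<bar> \<le> B"
    and y: "x $ i \<le> y $ i" "y $ i \<le> x $ i + d" "\<bar>y $ l - x $ l\<bar> \<le> d"
  shows "w y - w (coordinate_reflection i (x $ i) y) \<le> 2 * reflection_barrier i l (A / d\<^sup>2) B d x y"
proof -
  define R where "R = coordinate_reflection i (x $ i)"
  have R: "R y $ i = 2 * x $ i - y $ i" "R y $ l = y $ l" for y
    using \<open>l \<noteq> i\<close> by (simp_all add: R_def coordinate_reflection_def)
  have "A \<ge> 0"
    using bounds[of x] pos by force
  define c where "c = A / d\<^sup>2"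
  have "c \<ge> 0" "c * d\<^sup>2 = A"
    using \<open>A \<ge> 0\<close> pos by (simp_all add: c_def)
  define \<psi> where "\<psi> = reflection_barrier i l c B d x"
  obtain D\<psi> D2\<psi> where \<psi>: "twice_directionally_differentiable \<psi> D\<psi> D2\<psi>"
    and \<psi>_laplacian: "\<And>y. directional_laplacian D2\<psi> y = - 2 * B"
    using reflection_barrier_twice_directionally_differentiable[of i l c B d x] unfolding \<psi>_def by metis
  define z where "z y = (w y - w (R y)) / 2 - \<psi> y" for y
  obtain Dz D2z where z: "twice_directionally_differentiable z Dz D2z"
    and z_laplacian: "\<And>y. directional_laplacian D2z y
      = (directional_laplacian D2w y - directional_laplacian D2w (R y)) / 2 - directional_laplacian D2\<psi> y"
    using reflected_difference_twice_directionally_differentiable[OF w(1) \<psi>, of i "x $ i"]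
    unfolding z_def[abs_def] R_def by blast
  define K where "K = cbox (\<chi> k. if k = i then x $ k else x $ k - d) (x + (\<chi> k. d))"
  define U where "U = box (\<chi> k. if k = i then x $ k else x $ k - d) (x + (\<chi> k. d))"
  have K_iff: "y \<in> K \<longleftrightarrow> x $ i \<le> y $ i \<and> y $ i \<le> x $ i + d \<and> \<bar>y $ l - x $ l\<bar> \<le> d" for y
    unfolding K_def by (rule mem_cbox_half_square[OF \<open>l \<noteq> i\<close>])
  have U_iff: "y \<in> U \<longleftrightarrow> x $ i < y $ i \<and> y $ i < x $ i + d \<and> \<bar>y $ l - x $ l\<bar> < d" for y
    unfolding U_def by (rule mem_box_half_square[OF \<open>l \<noteq> i\<close>])
  have square: "\<bar>y $ k - x $ k\<bar> \<le> d \<and> \<bar>R y $ k - x $ k\<bar> \<le> d" if "y \<in> K" for y k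
    using exhaust_2_pair[OF \<open>l \<noteq> i\<close>, of k] that pos unfolding K_iff by (elim disjE) (auto simp: R abs_le_iff)
  have "z y \<le> 0"
  proof (rule weak_maximum_principle[OF z, of K U])
    show "compact K" "open U" "U \<subseteq> K"
      by (simp_all add: K_def U_def box_subset_cbox open_box)
    have "continuous_on K (\<lambda>y. w (R y))"
      using continuous_on_compose2[OF w(2) continuous_on_coordinate_reflection] by (simp add: R_def)
    then show "continuous_on K z"
      unfolding z_def \<psi>_def
      by (intro continuous_intros continuous_on_subset[OF w(2)] continuous_on_reflection_barrier subset_UNIV)
        simp_all
    show "y \<in> K"
      using y by (simp add: K_iff)
  next
    fix y assume y: "y \<in> K - U"
    show "z y \<le> 0"
    proof (cases "y $ i = x $ i")
      case True
      then have "R y $ k = y $ k" for k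
        using exhaust_2_pair[OF \<open>l \<noteq> i\<close>, of k] by (auto simp: R)
      then have "R y = y"
        by (simp add: vec_eq_iff)
      moreover have "\<psi> y \<ge> 0"
        using y pos \<open>c \<ge> 0\<close> unfolding \<psi>_def by (intro reflection_barrier_nonneg) (auto simp: K_iff)
      ultimately show ?thesis
        by (simp add: z_def)
    next
      case False
      with y have "y $ i = x $ i + d \<or> \<bar>y $ l - x $ l\<bar> = d"
        by (auto simp: K_iff U_iff)
      then have "A \<le> \<psi> y"
        using y pos \<open>c \<ge> 0\<close> \<open>c * d\<^sup>2 = A\<close> unfolding \<psi>_def
        by (metis reflection_barrier_boundary DiffE K_iff less_le)
      moreover have "\<bar>w y\<bar> \<le> A" "\<bar>w (R y)\<bar> \<le> A"
        using bounds square y by blast+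
      ultimately show ?thesis
        by (simp add: z_def abs_le_iff)
    qed
  next
    fix y assume "y \<in> U"
    then have "y \<in> K"
      by (simp add: K_iff U_iff)
    then have "\<bar>directional_laplacian D2w y\<bar> \<le> B" "\<bar>directional_laplacian D2w (R y)\<bar> \<le> B"
      using bounds square by blast+
    then show "directional_laplacian D2z y > 0"
      using pos unfolding z_laplacian \<psi>_laplacian by (simp add: abs_le_iff field_simps)
  qed
  then show ?thesis
    by (simp add: z_def R_def \<psi>_def c_def)
qed

lemma interior_derivative_upper_bound:
  fixes w :: "real^2 \<Rightarrow> real" and i :: 2
  assumes w: "twice_directionally_differentiable w Dw D2w" "continuous_on UNIV w"
    and pos: "d > 0" "B > 0"
    and bounds: "\<And>y. (\<forall>k. \<bar>y $ k - x $ k\<bar> \<le> d) \<Longrightarrow> \<bar>w y\<bar> \<le> A \<and> \<bar>directional_laplacian D2w y\<bar> \<le> B"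
  shows "Dw x (axis i 1) \<le> 2 * A / d + B * d"
proof -
  obtain l :: 2 where "l \<noteq> i"
    by (metis zero_neq_one)
  have slope: "((\<lambda>t. w (x + t *\<^sub>R axis i 1) - w (x + t *\<^sub>R (- axis i 1)))
      has_real_derivative 2 * Dw x (axis i 1)) (at 0)"
    using DERIV_diff[OF twice_directionally_differentiableD(1)[OF w(1), of x "axis i 1" 0]
        twice_directionally_differentiableD(1)[OF w(1), of x "- axis i 1" 0]]
    by (simp add: directional_derivative_minus[OF w(1)])
  have "2 * Dw x (axis i 1) \<le> 2 * (2 * A / d + B * d)"
  proof (rule DERIV_le_of_right_bound[OF slope _ pos(1)])
    fix t assume t: "0 < t" "t < d"
    define y where "y = x + t *\<^sub>R axis i 1"
    have y: "y $ i = x $ i + t" "y $ l = x $ l"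
      using \<open>l \<noteq> i\<close> by (simp_all add: y_def axis_def)
    have "coordinate_reflection i (x $ i) y = x + t *\<^sub>R (- axis i 1)"
      by (simp add: vec_eq_iff coordinate_reflection_def y_def axis_def)
    moreover have "w y - w (coordinate_reflection i (x $ i) y) \<le> 2 * reflection_barrier i l (A / d\<^sup>2) B d x y"
      using t pos y by (intro reflection_comparison[OF w \<open>l \<noteq> i\<close> pos bounds]) auto
    ultimately have "w y - w (x + t *\<^sub>R (- axis i 1)) \<le> 2 * reflection_barrier i l (A / d\<^sup>2) B d x y"
      by simp
    moreover have "reflection_barrier i l (A / d\<^sup>2) B d x y \<le> (2 * (A / d\<^sup>2) * d + B * d) * t"
      unfolding y_def using \<open>l \<noteq> i\<close> t pos bounds[of x]
      by (intro reflection_barrier_on_axis) auto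
    moreover have "(2 * (A / d\<^sup>2) * d + B * d) * t = (2 * A / d + B * d) * t"
      using pos by (simp add: power2_eq_square)
    ultimately show "w (x + t *\<^sub>R axis i 1) - w (x + t *\<^sub>R (- axis i 1)) \<le> 2 * (2 * A / d + B * d) * t"
      unfolding y_def by argo
  qed simp
  then show ?thesis
    by simp
qed

lemma interior_derivative_bound:
  fixes w :: "real^2 \<Rightarrow> real" and i :: 2
  assumes w: "twice_directionally_differentiable w Dw D2w" "continuous_on UNIV w"
    and pos: "d > 0" "B > 0"
    and bounds: "\<And>y. (\<forall>k. \<bar>y $ k - x $ k\<bar> \<le> d) \<Longrightarrow> \<bar>w y\<bar> \<le> A \<and> \<bar>directional_laplacian D2w y\<bar> \<le> B"
  shows "\<bar>Dw x (axis i 1)\<bar> \<le> 2 * A / d + B * d"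
proof -
  have "Dw x (axis i 1) \<le> 2 * A / d + B * d"
    using interior_derivative_upper_bound[OF w pos bounds] by blast
  moreover have "- Dw x (axis i 1) \<le> 2 * A / d + B * d"
    using interior_derivative_upper_bound[OF twice_directionally_differentiable_minus[OF w(1)]
        continuous_on_minus[OF w(2)] pos] bounds
    by (simp add: directional_laplacian_minus)
  ultimately show ?thesis
    by linarith
qed

section \<open>Twice differentiable maps of the plane\<close>

lemma has_vector_derivative_along_line:
  assumes "(f has_derivative f') (at (x + t *\<^sub>R v))"
  shows "((\<lambda>t. f (x + t *\<^sub>R v)) has_vector_derivative f' v) (at t)"
proof -
  have "((\<lambda>t. x + t *\<^sub>R v) has_derivative (\<lambda>h. h *\<^sub>R v)) (at t)"
    by (auto intro!: derivative_eq_intros)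
  from has_derivative_compose[OF this assms]
  show ?thesis
    unfolding has_vector_derivative_def
    using has_derivative_linear[OF assms] by (simp add: o_def linear_scale)
qed

lemma has_vector_derivative_vec_nth:
  "(f has_vector_derivative f') F \<Longrightarrow> ((\<lambda>t. f t $ j) has_real_derivative f' $ j) F"
  using bounded_linear.has_vector_derivative[OF bounded_linear_vec_nth]
  by (simp add: has_real_derivative_iff_has_vector_derivative)

lemma C2_plane_continuous: "C2_plane u \<Longrightarrow> continuous_on UNIV u"
  unfolding C2_plane_def
  by (meson continuous_at_imp_continuous_on has_derivative_continuous)

lemma C2_plane_component:
  assumes "C2_plane u"
  obtains D2w where
    "twice_directionally_differentiable (\<lambda>x. u x $ j) (\<lambda>x v. frechet_derivative u (at x) v $ j) D2w"
    and "\<And>x. directional_laplacian D2w x = laplacian u x $ j"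
proof -
  obtain Du D2u where Du: "\<And>x. (u has_derivative blinfun_apply (Du x)) (at x)"
    and D2u: "\<And>x. (Du has_derivative blinfun_apply (D2u x)) (at x)"
    using assms unfolding C2_plane_def by blast
  have frechet: "frechet_derivative u (at x) = blinfun_apply (Du x)" for x
    using frechet_derivative_at[OF Du] by simp
  have d1: "((\<lambda>t. u (x + t *\<^sub>R v)) has_vector_derivative Du (x + t *\<^sub>R v) v) (at t)" for x v t
    by (rule has_vector_derivative_along_line[OF Du])
  have "((\<lambda>y. Du y v) has_derivative (\<lambda>h. D2u y h v)) (at y)" for y v
    using bounded_linear.has_derivative[OF bounded_bilinear.bounded_linear_left[OF bounded_bilinear_blinfun_apply] D2u]
    by simp
  then have d2: "((\<lambda>t. Du (x + t *\<^sub>R v) v) has_vector_derivative D2u (x + t *\<^sub>R v) v v) (at t)" for x v t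
    by (rule has_vector_derivative_along_line)
  show ?thesis
  proof (rule that[of "\<lambda>x v. D2u x v v $ j"])
    show "twice_directionally_differentiable (\<lambda>x. u x $ j) (\<lambda>x v. frechet_derivative u (at x) v $ j)
        (\<lambda>x v. D2u x v v $ j)"
      unfolding twice_directionally_differentiable_def frechet
      using d1[of _ _ 0, THEN has_vector_derivative_vec_nth] d2[of _ _ 0, THEN has_vector_derivative_vec_nth]
      by simp
    have "vector_derivative (\<lambda>t. vector_derivative (\<lambda>s. u (x + s *\<^sub>R v)) (at t)) (at 0) = D2u x v v" for x v
      using vector_derivative_at[OF d2[of x v 0]] by (simp add: vector_derivative_at[OF d1])
    then show "directional_laplacian (\<lambda>x v. D2u x v v $ j) x = laplacian u x $ j" for x
      by (simp add: directional_laplacian_def laplacian_def)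
  qed
qed

lemma norm_diff_le_card_cart:
  fixes x y :: "real^'n"
  assumes "\<forall>k. \<bar>y $ k - x $ k\<bar> \<le> r"
  shows "norm (y - x) \<le> real CARD('n) * r"
proof -
  have "norm (y - x) \<le> (\<Sum>k\<in>UNIV. \<bar>(y - x) $ k\<bar>)"
    by (rule norm_le_l1_cart)
  also have "\<dots> \<le> real CARD('n) * r"
    using sum_bounded_above[of UNIV "\<lambda>k. \<bar>(y - x) $ k\<bar>" r] assms by simp
  finally show ?thesis .
qed

lemma norm_le_card_cart:
  fixes x :: "real^'n"
  assumes "\<And>k. \<bar>x $ k\<bar> \<le> r"
  shows "norm x \<le> real CARD('n) * r"
  using norm_diff_le_card_cart[of 0 x r] assms by simp

lemma onorm_le_entries_cart:
  fixes f :: "real^'n \<Rightarrow> real^'m"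
  assumes "linear f" and "\<And>i j. \<bar>f (axis j 1) $ i\<bar> \<le> K"
  shows "onorm f \<le> real CARD('m) * real CARD('n) * K"
proof -
  have "\<bar>matrix f $ i $ j\<bar> \<le> K" for i j
    by (simp add: matrix_def assms(2))
  then show ?thesis
    using onorm_le_matrix_component[of "matrix f" K] matrix_vector_mul(2)[OF assms(1)] by simp
qed

lemma C2_plane_derivative_bound:
  fixes u :: "real^2 \<Rightarrow> real^2"
  assumes u: "C2_plane u" and pos: "d > 0" "B > 0"
    and bounds: "\<And>y. (\<forall>k. \<bar>y $ k - x $ k\<bar> \<le> d) \<Longrightarrow> norm (u y) \<le> A \<and> norm (laplacian u y) \<le> B"
  shows "onorm (frechet_derivative u (at x)) \<le> 4 * (2 * A / d + B * d)"
proof -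
  have "\<bar>frechet_derivative u (at x) (axis i 1) $ j\<bar> \<le> 2 * A / d + B * d" for i j
  proof -
    obtain D2w where w: "twice_directionally_differentiable (\<lambda>x. u x $ j)
        (\<lambda>x v. frechet_derivative u (at x) v $ j) D2w"
      and lap: "\<And>y. directional_laplacian D2w y = laplacian u y $ j"
      using C2_plane_component[OF u] by blast
    show ?thesis
    proof (rule interior_derivative_bound[OF w _ pos])
      show "continuous_on UNIV (\<lambda>x. u x $ j)"
        by (intro continuous_on_component C2_plane_continuous u)
      fix y assume "\<forall>k. \<bar>y $ k - x $ k\<bar> \<le> d"
      with bounds show "\<bar>u y $ j\<bar> \<le> A \<and> \<bar>directional_laplacian D2w y\<bar> \<le> B"
        unfolding lap by (meson component_le_norm_cart order_trans)
    qed
  qed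
  moreover have "linear (frechet_derivative u (at x))"
    using u unfolding C2_plane_def
    by (metis frechet_derivative_at blinfun.bounded_linear_right bounded_linear.linear)
  ultimately show ?thesis
    using onorm_le_entries_cart[of "frechet_derivative u (at x)" "2 * A / d + B * d"] by simp
qed

section \<open>Solutions of the equation\<close>

lemma equation_solve_for_laplacian:
  fixes L v h :: "'a::real_normed_vector"
  assumes "e *\<^sub>R L + c *\<^sub>R v - (norm v)\<^sup>2 *\<^sub>R v + h = 0"
  shows "e *\<^sub>R L = ((norm v)\<^sup>2 - c) *\<^sub>R v - h"
  using assms by (simp add: algebra_simps eq_neg_iff_add_eq_0 add_eq_0_iff)

lemma inverse_cosh_le: "(s::real) > 0 \<Longrightarrow> 1 / cosh s \<le> 2 / s"
proof -
  assume "s > 0"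
  have "s \<le> exp s"
    using exp_ge_add_one_self[of s] by linarith
  also have "exp s \<le> 2 * cosh s"
    by (simp add: cosh_field_def)
  finally show ?thesis
    using \<open>s > 0\<close> by (simp add: divide_simps)
qed

lemma solution_small_outside:
  fixes u g :: "real^2 \<Rightarrow> real^2" and \<mu> :: "real^2 \<Rightarrow> real"
  assumes u: "C2_plane u"
    and eq: "\<And>x. \<epsilon>\<^sup>2 *\<^sub>R laplacian u x + \<mu> x *\<^sub>R u x - (norm (u x))\<^sup>2 *\<^sub>R u x + g x = 0"
    and pos: "\<epsilon> > 0" "m > 0" "r > 0"
    and u_bound: "\<And>x. norm (u x) \<le> M" and g_bound: "\<And>x. norm (g x) \<le> E"
    and \<mu>_neg: "\<And>x. R \<le> norm x \<Longrightarrow> \<mu> x \<le> - m"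
    and x: "R + 2 * r \<le> norm x"
  shows "norm (u x) \<le> 2 * (E / m + 4 * M * \<epsilon> / (sqrt m * r))"
proof -
  have "\<bar>u x $ j\<bar> \<le> E / m + 4 * M * \<epsilon> / (sqrt m * r)" for j
  proof -
  obtain D2w where w: "twice_directionally_differentiable (\<lambda>x. u x $ j)
      (\<lambda>x v. frechet_derivative u (at x) v $ j) D2w"
    and lap: "\<And>y. directional_laplacian D2w y = laplacian u y $ j"
    using C2_plane_component[OF u] by blast
  have "\<bar>u x $ j\<bar> \<le> E / m + real CARD(2) * M / cosh (sqrt m / \<epsilon> * r)"
  proof (rule screened_interior_bound[OF w _ pos])
    show "continuous_on UNIV (\<lambda>x. u x $ j)"
      by (intro continuous_on_component C2_plane_continuous u)
    fix y assume "\<forall>k. \<bar>y $ k - x $ k\<bar> \<le> r"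
    then have "norm (y - x) \<le> 2 * r"
      using norm_diff_le_card_cart by fastforce
    then have "R \<le> norm y"
      using x norm_triangle_ineq2[of x y] by (simp add: norm_minus_commute)
    then have c: "(norm (u y))\<^sup>2 - \<mu> y \<ge> m"
      using \<mu>_neg by (smt (verit) zero_le_power2)
    have "\<epsilon>\<^sup>2 * laplacian u y $ j - ((norm (u y))\<^sup>2 - \<mu> y) * u y $ j = - g y $ j"
      using arg_cong[where f = "\<lambda>v. v $ j", OF equation_solve_for_laplacian[OF eq[of y]]] by simp
    moreover have "\<bar>g y $ j\<bar> \<le> E" "\<bar>u y $ j\<bar> \<le> M"
      using g_bound u_bound component_le_norm_cart order_trans by blast+
    ultimately show "\<bar>u y $ j\<bar> \<le> M \<and>
        (\<exists>c\<ge>m. \<bar>\<epsilon>\<^sup>2 * directional_laplacian D2w y - c * u y $ j\<bar> \<le> E)"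
      using c unfolding lap by (intro conjI exI[of _ "(norm (u y))\<^sup>2 - \<mu> y"]) simp_all
  qed
  also have "real CARD(2) * M / cosh (sqrt m / \<epsilon> * r) \<le> 4 * M * \<epsilon> / (sqrt m * r)"
  proof -
    have "M \<ge> 0"
      using u_bound[of x] norm_ge_zero by (rule order_trans[rotated])
    then have "M * (1 / cosh (sqrt m / \<epsilon> * r)) \<le> M * (2 / (sqrt m / \<epsilon> * r))"
      using pos by (intro mult_left_mono inverse_cosh_le) auto
    then show ?thesis
      using pos by (simp add: field_simps)
  qed
  finally show ?thesis
    by simp
  qed
  then have "norm (u x) \<le> real CARD(2) * (E / m + 4 * M * \<epsilon> / (sqrt m * r))"
    by (rule norm_le_card_cart)
  then show ?thesis
    by simp
qed

lemma solution_derivative_bounded: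
  fixes u g :: "real^2 \<Rightarrow> real^2" and \<mu> :: "real^2 \<Rightarrow> real"
  assumes u: "C2_plane u"
    and eq: "\<And>x. \<epsilon>\<^sup>2 *\<^sub>R laplacian u x + \<mu> x *\<^sub>R u x - (norm (u x))\<^sup>2 *\<^sub>R u x + g x = 0"
    and "\<epsilon> > 0"
    and u_bound: "\<And>x. norm (u x) \<le> M" and \<mu>_bound: "\<And>x. \<bar>\<mu> x\<bar> \<le> M\<mu>"
    and g_bound: "\<And>x. norm (g x) \<le> \<epsilon> * G"
    and small: "\<And>y. R \<le> norm y \<Longrightarrow> norm (u y) \<le> \<epsilon> * K"
    and x: "R + 2 * \<epsilon> \<le> norm x"
  shows "onorm (frechet_derivative u (at x)) \<le> 4 * (2 * K + ((M\<^sup>2 + M\<mu>) * K + G + 1))"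
proof -
  define L where "L = (M\<^sup>2 + M\<mu>) * K + G"
  have "R \<le> norm x"
    using x \<open>\<epsilon> > 0\<close> by linarith
  then have "0 \<le> \<epsilon> * K" "0 \<le> M\<mu>" "0 \<le> \<epsilon> * G"
    using small[of x] \<mu>_bound[of x] g_bound[of x] by (simp_all add: order_trans[OF norm_ge_zero]
        order_trans[OF abs_ge_zero])
  then have "K \<ge> 0" "M\<mu> \<ge> 0" "G \<ge> 0"
    using \<open>\<epsilon> > 0\<close> by (simp_all add: zero_le_mult_iff)
  then have "L \<ge> 0"
    by (simp add: L_def)
  have "onorm (frechet_derivative u (at x)) \<le> 4 * (2 * (\<epsilon> * K) / \<epsilon> + (L + 1) / \<epsilon> * \<epsilon>)"
  proof (rule C2_plane_derivative_bound[OF u \<open>\<epsilon> > 0\<close>])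
    show "(L + 1) / \<epsilon> > 0"
      using \<open>L \<ge> 0\<close> \<open>\<epsilon> > 0\<close> by simp
    fix y assume "\<forall>k. \<bar>y $ k - x $ k\<bar> \<le> \<epsilon>"
    then have "norm (y - x) \<le> 2 * \<epsilon>"
      using norm_diff_le_card_cart by fastforce
    then have "R \<le> norm y"
      using x norm_triangle_ineq2[of x y] by (simp add: norm_minus_commute)
    then have u_small: "norm (u y) \<le> \<epsilon> * K"
      by (rule small)
    have "(norm (u y))\<^sup>2 \<le> M\<^sup>2"
      using u_bound[of y] by (intro power_mono) auto
    then have "\<bar>(norm (u y))\<^sup>2 - \<mu> y\<bar> \<le> M\<^sup>2 + M\<mu>"
      using \<mu>_bound[of y] zero_le_power2[of "norm (u y)"] by (smt (verit))
    then have "\<bar>(norm (u y))\<^sup>2 - \<mu> y\<bar> * norm (u y) \<le> (M\<^sup>2 + M\<mu>) * (\<epsilon> * K)"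
      using u_small by (intro mult_mono) auto
    have "\<epsilon>\<^sup>2 * norm (laplacian u y) = norm (((norm (u y))\<^sup>2 - \<mu> y) *\<^sub>R u y - g y)"
      using arg_cong[where f = norm, OF equation_solve_for_laplacian[OF eq[of y]]] by simp
    also have "\<dots> \<le> \<bar>(norm (u y))\<^sup>2 - \<mu> y\<bar> * norm (u y) + norm (g y)"
      using norm_triangle_ineq4 by (metis norm_scaleR)
    also have "\<dots> \<le> (M\<^sup>2 + M\<mu>) * (\<epsilon> * K) + \<epsilon> * G"
      using \<open>\<bar>(norm (u y))\<^sup>2 - \<mu> y\<bar> * norm (u y) \<le> (M\<^sup>2 + M\<mu>) * (\<epsilon> * K)\<close> g_bound[of y]
      by linarith
    also have "\<dots> = \<epsilon> * L"
      by (simp add: L_def algebra_simps)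
    finally have "\<epsilon>\<^sup>2 * norm (laplacian u y) \<le> \<epsilon> * L" .
    then have "norm (laplacian u y) \<le> (L + 1) / \<epsilon>"
      using \<open>\<epsilon> > 0\<close> by (simp add: field_simps power2_eq_square)
    with u_small show "norm (u y) \<le> \<epsilon> * K \<and> norm (laplacian u y) \<le> (L + 1) / \<epsilon>"
      by blast
  qed
  then show ?thesis
    using \<open>\<epsilon> > 0\<close> by (simp add: L_def)
qed

lemma solution_exterior_bounds:
  fixes u g :: "real^2 \<Rightarrow> real^2" and \<mu> :: "real^2 \<Rightarrow> real"
  assumes u: "C2_plane u"
    and eq: "\<And>x. \<epsilon>\<^sup>2 *\<^sub>R laplacian u x + \<mu> x *\<^sub>R u x - (norm (u x))\<^sup>2 *\<^sub>R u x + g x = 0"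
    and pos: "\<epsilon> > 0" "m > 0" "r > 0"
    and u_bound: "\<And>x. norm (u x) \<le> M" and \<mu>_bound: "\<And>x. \<bar>\<mu> x\<bar> \<le> M\<mu>"
    and g_bound: "\<And>x. norm (g x) \<le> \<epsilon> * G"
    and \<mu>_neg: "\<And>x. R \<le> norm x \<Longrightarrow> \<mu> x \<le> - m"
    and x: "R + 2 * r + 2 * \<epsilon> \<le> norm x"
  defines "K \<equiv> 2 * (G / m + 4 * M / (sqrt m * r))"
  shows "norm (u x) \<le> \<epsilon> * K"
    and "onorm (frechet_derivative u (at x)) \<le> 4 * (2 * K + ((M\<^sup>2 + M\<mu>) * K + G + 1))"
proof -
  have small: "norm (u y) \<le> \<epsilon> * K" if "R + 2 * r \<le> norm y" for y
  proof -
    have "norm (u y) \<le> 2 * (\<epsilon> * G / m + 4 * M * \<epsilon> / (sqrt m * r))"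
      by (rule solution_small_outside[OF u eq pos u_bound g_bound \<mu>_neg that])
    then show ?thesis
      by (simp add: K_def algebra_simps)
  qed
  show "norm (u x) \<le> \<epsilon> * K"
    using x pos by (intro small) simp
  show "onorm (frechet_derivative u (at x)) \<le> 4 * (2 * K + ((M\<^sup>2 + M\<mu>) * K + G + 1))"
    by (rule solution_derivative_bounded[OF u eq pos(1) u_bound \<mu>_bound g_bound small x])
qed

lemma smooth_real_strict_antimono:
  assumes "smooth_real g" and "\<And>r. r > 0 \<Longrightarrow> deriv g r < 0" and "0 < r1" "r1 < r2"
  shows "g r2 < g r1"
proof (rule DERIV_neg_imp_decreasing[OF \<open>r1 < r2\<close>])
  fix x assume "r1 \<le> x"
  have "g differentiable at x"
    using assms(1) unfolding smooth_real_def by (metis funpow_0)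
  then show "\<exists>y. (g has_real_derivative y) (at x) \<and> y < 0"
    using assms(2,3) \<open>r1 \<le> x\<close> DERIV_deriv_iff_real_differentiable by force
qed

lemma radial_negative_beyond_root:
  fixes \<mu> :: "'a::real_normed_vector \<Rightarrow> real"
  assumes "\<And>x. \<mu> x = g (norm x)" "smooth_real g" "\<And>r. r > 0 \<Longrightarrow> deriv g r < 0"
    and "\<rho> > 0" "g \<rho> = 0" "\<rho> < R"
  shows "g R < 0" and "\<And>x. R \<le> norm x \<Longrightarrow> \<mu> x \<le> g R"
proof -
  show "g R < 0"
    using smooth_real_strict_antimono[OF assms(2,3,4,6)] assms(5) by simp
  show "\<mu> x \<le> g R" if "R \<le> norm x" for x
    using smooth_real_strict_antimono[OF assms(2,3), of R "norm x"] that assms(1,4,6)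
    by (cases "norm x = R") auto
qed

theorem mainTheorem7:
  fixes \<mu> :: "real^2 \<Rightarrow> real" and \<mu>rad :: "real \<Rightarrow> real"
    and f :: "real^2 \<Rightarrow> real^2" and frad :: "real \<Rightarrow> real"
    and \<rho> \<epsilon>0 :: real and a :: "real \<Rightarrow> real" and u :: "real \<Rightarrow> real^2 \<Rightarrow> real^2"
  assumes mu_def: "\<And>x. \<mu> x = \<mu>rad (norm x)"
    and mu_smooth: "smooth_real \<mu>rad"
    and mu_even: "\<And>r. \<mu>rad (- r) = \<mu>rad r"
    and mu_bounded: "bounded (range \<mu>)"
    and mu_decr: "\<And>r. r > 0 \<Longrightarrow> deriv \<mu>rad r < 0"
    and rho_pos: "\<rho> > 0" and rho_zero: "\<mu>rad \<rho> = 0"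
    and rho_unique: "\<And>r. r > 0 \<Longrightarrow> \<mu>rad r = 0 \<Longrightarrow> r = \<rho>"
    and f_def: "\<And>x. f x = frad (norm x) *\<^sub>R (x /\<^sub>R norm x)"
    and f_smooth: "smooth_real frad"
    and f_odd: "\<And>r. frad (- r) = - frad r"
    and f_L1: "integrable lborel f"
    and f_Linf: "bounded (range f)"
    and f_pos: "\<And>r. r > 0 \<Longrightarrow> frad r > 0"
    and eps0_pos: "\<epsilon>0 > 0"
    and a_nonneg: "\<And>\<epsilon>. \<epsilon> \<in> {0<..<\<epsilon>0} \<Longrightarrow> a \<epsilon> \<ge> 0"
    and a_bounded: "\<exists>A. \<forall>\<epsilon>\<in>{0<..<\<epsilon>0}. a \<epsilon> \<le> A"
    and u_C2: "\<And>\<epsilon>. \<epsilon> \<in> {0<..<\<epsilon>0} \<Longrightarrow> C2_plane (u \<epsilon>)"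
    and u_eq: "\<And>\<epsilon> x. \<epsilon> \<in> {0<..<\<epsilon>0} \<Longrightarrow>
       \<epsilon>\<^sup>2 *\<^sub>R laplacian (u \<epsilon>) x + \<mu> x *\<^sub>R u \<epsilon> x - (norm (u \<epsilon> x))\<^sup>2 *\<^sub>R u \<epsilon> x
         + (\<epsilon> * a \<epsilon>) *\<^sub>R f x = 0"
    and u_bounded: "\<exists>M. \<forall>\<epsilon>\<in>{0<..<\<epsilon>0}. \<forall>x. norm (u \<epsilon> x) \<le> M"
  shows "\<forall>\<rho>1 > \<rho>. \<exists>\<epsilon>1 > 0. \<epsilon>1 \<le> \<epsilon>0 \<and> (\<exists>C. \<forall>\<epsilon>\<in>{0<..<\<epsilon>1}. \<forall>x. norm x \<ge> \<rho>1 \<longrightarrow>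
            norm (u \<epsilon> x) / \<epsilon> \<le> C \<and> onorm (frechet_derivative (u \<epsilon>) (at x)) \<le> C)"
proof (intro allI impI)
  fix \<rho>1 assume "\<rho>1 > \<rho>"
  define \<delta> where "\<delta> = (\<rho>1 - \<rho>) / 4"
  have "\<delta> > 0"
    using \<open>\<rho>1 > \<rho>\<close> by (simp add: \<delta>_def)
  define m where "m = - \<mu>rad (\<rho> + \<delta>)"
  have "m > 0" and \<mu>_neg: "\<And>x. \<rho> + \<delta> \<le> norm x \<Longrightarrow> \<mu> x \<le> - m"
    using radial_negative_beyond_root[OF mu_def mu_smooth mu_decr rho_pos rho_zero, of "\<rho> + \<delta>"] \<open>\<delta> > 0\<close>
    by (auto simp: m_def)
  obtain M where M: "\<And>\<epsilon> x. \<epsilon> \<in> {0<..<\<epsilon>0} \<Longrightarrow> norm (u \<epsilon> x) \<le> M"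
    using u_bounded by blast
  obtain A where A: "\<And>\<epsilon>. \<epsilon> \<in> {0<..<\<epsilon>0} \<Longrightarrow> a \<epsilon> \<le> A"
    using a_bounded by blast
  obtain F where F: "\<And>x. norm (f x) \<le> F"
    using f_Linf unfolding bounded_iff by blast
  obtain M\<mu> where M\<mu>: "\<And>x. \<bar>\<mu> x\<bar> \<le> M\<mu>"
    using mu_bounded unfolding bounded_iff by auto
  have g_bound: "norm ((\<epsilon> * a \<epsilon>) *\<^sub>R f x) \<le> \<epsilon> * (A * F)" if "\<epsilon> \<in> {0<..<\<epsilon>0}" for \<epsilon> x
    using that a_nonneg[OF that] A[OF that] F[of x]
    by (simp add: abs_mult mult.assoc mult_mono order_trans[OF norm_ge_zero F[of x]])
  define K where "K = 2 * (A * F / m + 4 * M / (sqrt m * \<delta>))"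
  define C where "C = max K (4 * (2 * K + ((M\<^sup>2 + M\<mu>) * K + A * F + 1)))"
  show "\<exists>\<epsilon>1>0. \<epsilon>1 \<le> \<epsilon>0 \<and> (\<exists>C. \<forall>\<epsilon>\<in>{0<..<\<epsilon>1}. \<forall>x. \<rho>1 \<le> norm x \<longrightarrow>
      norm (u \<epsilon> x) / \<epsilon> \<le> C \<and> onorm (frechet_derivative (u \<epsilon>) (at x)) \<le> C)"
  proof (rule exI[of _ "min \<epsilon>0 (\<delta> / 2)"], intro conjI exI[of _ C] ballI allI impI)
    show "min \<epsilon>0 (\<delta> / 2) > 0" "min \<epsilon>0 (\<delta> / 2) \<le> \<epsilon>0"
      using eps0_pos \<open>\<delta> > 0\<close> by auto
    fix \<epsilon> and x :: "real^2" assume \<epsilon>: "\<epsilon> \<in> {0<..<min \<epsilon>0 (\<delta> / 2)}" and "\<rho>1 \<le> norm x"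
    then have \<epsilon>0: "\<epsilon> \<in> {0<..<\<epsilon>0}" and x: "\<rho> + \<delta> + 2 * \<delta> + 2 * \<epsilon> \<le> norm x"
      by (auto simp: \<delta>_def field_simps)
    note bounds = solution_exterior_bounds[OF u_C2[OF \<epsilon>0] u_eq[OF \<epsilon>0] _ \<open>m > 0\<close> \<open>\<delta> > 0\<close>
        M[OF \<epsilon>0] M\<mu> g_bound[OF \<epsilon>0] \<mu>_neg x, folded K_def]
    have "norm (u \<epsilon> x) / \<epsilon> \<le> K"
      using bounds(1) \<epsilon> by (simp add: divide_le_eq mult.commute)
    then show "norm (u \<epsilon> x) / \<epsilon> \<le> C"
      by (simp add: C_def)
    show "onorm (frechet_derivative (u \<epsilon>) (at x)) \<le> C"
      using bounds(2) \<epsilon> by (simp add: C_def)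
  qed
qed

end
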